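(* Let $k\ge 2$ and $n=2k+1$. The distance characteristic polynomial of the friendship graph $F^{k}_{n}$ is $$P_D(\lambda)=(\lambda+1)^{n-k-1}(\lambda+3)^{k-1}\bigl[\lambda^{2}-(4k-3)\lambda-2k\bigr].$$ If $\lambda_1\ge\lambda_2\ge\cdots\ge\lambda_n$ is the distance spectrum of $F^{k}_{n}$, then $-1<\lambda_2<-\frac12$, $\lambda_3=-1$ and $\lambda_n=-3$.
   Context: For a connected graph $G$, the distance matrix $D(G)$ has as $(i,j)$-entry the distance between the $i$-th and $j$-th vertices; $P_D(\lambda)=\det(\lambda I-D(G))$ and the distance spectrum consists of the eigenvalues of $D(G)$. The friendship graph $F^{k}_{n}$ ($n=2k+1$) is obtained by taking $k$ copies of $C_3$ and identifying one vertex of each copy into a single common vertex. *)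

theory Defs
  imports "Jordan_Normal_Form.Char_Poly"
begin

definition is_walk :: "(nat \<Rightarrow> nat \<Rightarrow> bool) \<Rightarrow> nat set \<Rightarrow> nat list \<Rightarrow> nat \<Rightarrow> nat \<Rightarrow> bool" where
  "is_walk adj V p u v \<longleftrightarrow> p \<noteq> [] \<and> hd p = u \<and> last p = v \<and> set p \<subseteq> V \<and>
     (\<forall>i. Suc i < length p \<longrightarrow> adj (p ! i) (p ! Suc i))"

definition graph_dist :: "(nat \<Rightarrow> nat \<Rightarrow> bool) \<Rightarrow> nat set \<Rightarrow> nat \<Rightarrow> nat \<Rightarrow> nat" where
  "graph_dist adj V u v = (LEAST m. \<exists>p. is_walk adj V p u v \<and> length p = Suc m)"

definition distance_matrix :: "(nat \<Rightarrow> nat \<Rightarrow> bool) \<Rightarrow> nat \<Rightarrow> real mat" where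
  "distance_matrix adj n = mat n n (\<lambda>(i, j). real (graph_dist adj {0..<n} i j))"

text \<open>Friendship graph F^k_n, n = 2k+1: vertex 0 is the common vertex, and for
i < k the triangle i consists of 0, 2i+1, 2i+2.\<close>
definition friendship_adj :: "nat \<Rightarrow> nat \<Rightarrow> nat \<Rightarrow> bool" where
  "friendship_adj k u v \<longleftrightarrow> u < 2*k+1 \<and> v < 2*k+1 \<and> u \<noteq> v \<and>
     (u = 0 \<or> v = 0 \<or> (u + 1) div 2 = (v + 1) div 2)"

end

theory Submission
  imports Defs
begin

text \<open>The distance matrix D of the friendship graph has an explicit eigenbasis: the vectors
supported on one triangle and antisymmetric in its two outer vertices have eigenvalue -1;
the differences of the indicators of two triangles have eigenvalue -3; and the span of the
centre indicator and the indicator of the outer vertices is D-invariant, on which D acts by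
the 2x2 matrix with characteristic polynomial x^2 - (4k-3)x - 2k. Changing to this basis makes
D block diagonal, which gives the characteristic polynomial. Its quadratic factor has one
positive root and one root in (-1, -1/2), so the sorted spectrum is that root followed by
k copies of -1 and k - 1 copies of -3.\<close>

lemma walk_singleton: "u \<in> V \<Longrightarrow> is_walk adj V [u] u u"
  by (simp add: is_walk_def)

lemma walk_length_1_ends_eq: "is_walk adj V p u v \<Longrightarrow> length p = 1 \<Longrightarrow> u = v"
  by (cases p) (auto simp: is_walk_def)

lemma walk_length_2_adj: "is_walk adj V p u v \<Longrightarrow> length p = 2 \<Longrightarrow> adj u v"
  by (auto simp: is_walk_def numeral_2_eq_2 length_Suc_conv dest: spec[of _ 0])

lemma graph_dist_self: "u \<in> V \<Longrightarrow> graph_dist adj V u u = 0"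
  unfolding graph_dist_def by (rule Least_equality) (auto intro: walk_singleton)

lemma graph_dist_eq_1:
  assumes "u \<in> V" "v \<in> V" "u \<noteq> v" "adj u v"
  shows "graph_dist adj V u v = 1"
  unfolding graph_dist_def
proof (rule Least_equality)
  show "\<exists>p. is_walk adj V p u v \<and> length p = Suc 1"
    by (rule exI[of _ "[u, v]"]) (use assms in \<open>auto simp: is_walk_def less_Suc_eq\<close>)
next
  fix m assume "\<exists>p. is_walk adj V p u v \<and> length p = Suc m"
  then show "1 \<le> m" using walk_length_1_ends_eq assms by (cases m) auto
qed

lemma graph_dist_eq_2:
  assumes "u \<in> V" "v \<in> V" "w \<in> V" "u \<noteq> v" "\<not> adj u v" "adj u w" "adj w v"
  shows "graph_dist adj V u v = 2"
  unfolding graph_dist_def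
proof (rule Least_equality)
  show "\<exists>p. is_walk adj V p u v \<and> length p = Suc 2"
    by (rule exI[of _ "[u, w, v]"]) (use assms in \<open>auto simp: is_walk_def less_Suc_eq nth_Cons'\<close>)
next
  fix m assume "\<exists>p. is_walk adj V p u v \<and> length p = Suc m"
  then obtain p where "is_walk adj V p u v" "length p = Suc m" by auto
  then show "2 \<le> m"
    using walk_length_1_ends_eq walk_length_2_adj[of adj V p u v] assms
    by (cases m; cases "m - 1") (auto simp: numeral_2_eq_2)
qed

definition mate :: "nat \<Rightarrow> nat" where
  "mate r = (if odd r then r + 1 else r - 1)"

lemma mate_ge_1: "r \<ge> 1 \<Longrightarrow> mate r \<ge> 1"
  and mate_neq: "r \<ge> 1 \<Longrightarrow> mate r \<noteq> r"
  by (auto simp: mate_def)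

lemma mate_less: "r \<ge> 1 \<Longrightarrow> r < 2 * k + 1 \<Longrightarrow> mate r < 2 * k + 1"
  by (auto simp: mate_def elim!: oddE)

lemma same_triangle_iff_mate:
  "u \<ge> 1 \<Longrightarrow> v \<ge> 1 \<Longrightarrow> u \<noteq> v \<Longrightarrow> (u + 1) div 2 = (v + 1) div 2 \<longleftrightarrow> v = mate u"
  by (cases "odd u"; cases "odd v") (auto simp: mate_def elim!: oddE evenE, presburger)

definition friendship_dist :: "nat \<Rightarrow> nat \<Rightarrow> real" where
  "friendship_dist r c = (if r = c then 0 else if r = 0 \<or> c = 0 \<or> c = mate r then 1 else 2)"

lemma distance_matrix_friendship:
  assumes n: "n = 2 * k + 1"
  shows "distance_matrix (friendship_adj k) n = mat n n (\<lambda>(r, c). friendship_dist r c)"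
proof (rule eq_matI)
  fix r c assume "r < dim_row (mat n n (\<lambda>(r, c). friendship_dist r c))"
    "c < dim_col (mat n n (\<lambda>(r, c). friendship_dist r c))"
  then have rc: "r < n" "c < n" by auto
  have adj_iff: "friendship_adj k r c \<longleftrightarrow> r \<noteq> c \<and> (r = 0 \<or> c = 0 \<or> c = mate r)"
    using rc n same_triangle_iff_mate[of r c] mate_ge_1[of r]
    by (cases "r = 0 \<or> c = 0") (auto simp: friendship_adj_def)
  have "graph_dist (friendship_adj k) {0..<n} r c = friendship_dist r c"
  proof (cases "r \<noteq> c \<and> \<not> friendship_adj k r c")
    case True
    then have "r \<noteq> c" "r \<noteq> 0" "c \<noteq> 0" "c \<noteq> mate r" using adj_iff by auto
    moreover have "graph_dist (friendship_adj k) {0..<n} r c = 2"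
      by (rule graph_dist_eq_2[where w = 0]) (use True rc n in \<open>auto simp: friendship_adj_def\<close>)
    ultimately show ?thesis by (simp add: friendship_dist_def)
  qed (use rc adj_iff in \<open>auto simp: friendship_dist_def graph_dist_self graph_dist_eq_1\<close>)
  then show "distance_matrix (friendship_adj k) n $$ (r, c) = mat n n (\<lambda>(r, c). friendship_dist r c) $$ (r, c)"
    using rc by (simp add: distance_matrix_def)
qed (auto simp: distance_matrix_def)

lemma friendship_dist_row:
  assumes n: "n = 2 * k + 1" and r: "r < n"
  shows "(\<Sum>l = 0..<n. friendship_dist r l * x l) =
    (if r = 0 then (\<Sum>l = 0..<n. x l) - x 0
     else 2 * (\<Sum>l = 0..<n. x l) - x 0 - 2 * x r - x (mate r))"
proof (cases "r = 0")
  case True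
  have "(\<Sum>l = 0..<n. friendship_dist r l * x l) = (\<Sum>l = 0..<n. x l - (if l = 0 then x l else 0))"
    by (rule sum.cong) (auto simp: True friendship_dist_def)
  then show ?thesis using True n by (simp add: sum_subtractf)
next
  case False
  then have mate_r: "mate r < n" "mate r \<noteq> r" "mate r \<noteq> 0"
    using mate_less[of r k] mate_neq[of r] mate_ge_1[of r] n r by auto
  have "(\<Sum>l = 0..<n. friendship_dist r l * x l) = (\<Sum>l = 0..<n. 2 * x l
      - (if l = 0 then x l else 0) - 2 * (if l = r then x l else 0) - (if l = mate r then x l else 0))"
    by (rule sum.cong) (use False mate_r in \<open>auto simp: friendship_dist_def\<close>)
  then show ?thesis
    using False mate_r r by (simp add: sum_subtractf sum_distrib_left[symmetric])
qed

definition pair_ind :: "nat \<Rightarrow> nat \<Rightarrow> real" where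
  "pair_ind m r = (if r = 2 * m + 1 \<or> r = 2 * m + 2 then 1 else 0)"

definition pair_alt :: "nat \<Rightarrow> nat \<Rightarrow> real" where
  "pair_alt m r = (if r = 2 * m + 1 then 1 else if r = 2 * m + 2 then -1 else 0)"

lemma pair_ind_mate: "r \<ge> 1 \<Longrightarrow> pair_ind m (mate r) = pair_ind m r"
  by (auto simp: pair_ind_def mate_def elim!: oddE evenE) presburger+

lemma pair_alt_mate: "r \<ge> 1 \<Longrightarrow> pair_alt m (mate r) = - pair_alt m r"
  by (auto simp: pair_alt_def mate_def elim!: oddE evenE) presburger+

lemma sum_pair_ind_mult:
  "2 * m + 2 < n \<Longrightarrow> (\<Sum>l = 0..<n. pair_ind m l * x l) = x (2 * m + 1) + x (2 * m + 2)"
proof -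
  assume "2 * m + 2 < n"
  have "(\<Sum>l = 0..<n. pair_ind m l * x l) =
      (\<Sum>l = 0..<n. (if l = 2 * m + 1 then x l else 0) + (if l = 2 * m + 2 then x l else 0))"
    by (rule sum.cong) (auto simp: pair_ind_def)
  then show ?thesis using \<open>2 * m + 2 < n\<close> by (simp add: sum.distrib)
qed

lemma sum_pair_alt_mult:
  "2 * m + 2 < n \<Longrightarrow> (\<Sum>l = 0..<n. pair_alt m l * x l) = x (2 * m + 1) - x (2 * m + 2)"
proof -
  assume "2 * m + 2 < n"
  have "(\<Sum>l = 0..<n. pair_alt m l * x l) =
      (\<Sum>l = 0..<n. (if l = 2 * m + 1 then x l else 0) - (if l = 2 * m + 2 then x l else 0))"
    by (rule sum.cong) (auto simp: pair_alt_def)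
  then show ?thesis using \<open>2 * m + 2 < n\<close> by (simp add: sum_subtractf)
qed

definition eigvec :: "nat \<Rightarrow> nat \<Rightarrow> nat \<Rightarrow> real" where
  "eigvec k c r =
    (if c = 0 then (if r = 0 then 1 else 0)
     else if c = 1 then (if r = 0 then 0 else 1)
     else if c < k + 2 then pair_alt (c - 2) r
     else pair_ind 0 r - pair_ind (c - k - 1) r)"

lemma eigvec_at_centre: "eigvec k c 0 = (if c = 0 then 1 else 0)"
  by (simp add: eigvec_def pair_alt_def pair_ind_def)

lemma eigvec_0: "eigvec k 0 r = (if r = 0 then 1 else 0)"
  and eigvec_1: "eigvec k 1 r = (if r = 0 then 0 else 1)"
  by (simp_all add: eigvec_def)

lemma eigvec_mate:
  "r \<ge> 1 \<Longrightarrow> eigvec k c (mate r) = (if 2 \<le> c \<and> c < k + 2 then - eigvec k c r else eigvec k c r)"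
  using mate_ge_1[of r] by (simp add: eigvec_def pair_alt_mate pair_ind_mate)

lemma sum_eigvec_1_mult: "(\<Sum>l = 0..<n. eigvec k 1 l * x l) = (\<Sum>l = 0..<n. x l) - (if n = 0 then 0 else x 0)"
proof -
  have "(\<Sum>l = 0..<n. eigvec k 1 l * x l) = (\<Sum>l = 0..<n. x l - (if l = 0 then x l else 0))"
    by (rule sum.cong) (auto simp: eigvec_def)
  then show ?thesis by (simp add: sum_subtractf)
qed

lemma sum_eigvec:
  assumes n: "n = 2 * k + 1" and c: "c < n"
  shows "(\<Sum>l = 0..<n. eigvec k c l) = (if c = 0 then 1 else if c = 1 then 2 * k else 0)"
proof -
  consider "c = 0" | "c = 1" | "2 \<le> c" "c < k + 2" | "k + 2 \<le> c" by linarith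
  then show ?thesis
  proof cases
    case 1
    then show ?thesis using n by (simp add: eigvec_def)
  next
    case 2
    then show ?thesis using sum_eigvec_1_mult[where x = "\<lambda>_. 1" and n = n] n by simp
  next
    case 3
    then show ?thesis using sum_pair_alt_mult[where x = "\<lambda>_. 1" and m = "c - 2" and n = n] n
      by (simp add: eigvec_def)
  next
    case 4
    then show ?thesis
      using sum_pair_ind_mult[where x = "\<lambda>_. 1" and n = n] n c
      by (simp add: eigvec_def sum_subtractf)
  qed
qed

definition reduced_entry :: "nat \<Rightarrow> nat \<Rightarrow> nat \<Rightarrow> real" where
  "reduced_entry k l c =
    (if c = 0 then (if l = 1 then 1 else 0)
     else if c = 1 then (if l = 0 then 2 * real k else if l = 1 then 4 * real k - 3 else 0)
     else if l = c then (if c < k + 2 then -1 else -3)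
     else 0)"

lemma friendship_dist_eigvec:
  assumes n: "n = 2 * k + 1" and k: "k \<ge> 1" and r: "r < n" and c: "c < n"
  shows "(\<Sum>l = 0..<n. friendship_dist r l * eigvec k c l) =
    (\<Sum>l = 0..<n. eigvec k l r * reduced_entry k l c)"
proof -
  let ?F = "if c = 0 then eigvec k 1 r
    else if c = 1 then 2 * real k * eigvec k 0 r + (4 * real k - 3) * eigvec k 1 r
    else (if c < k + 2 then -1 else -3) * eigvec k c r"
  have "(\<Sum>l = 0..<n. friendship_dist r l * eigvec k c l) = ?F"
  proof -
    consider "c = 0" | "c = 1" | "2 \<le> c" by linarith
    then show ?thesis
      unfolding friendship_dist_row[OF n r] sum_eigvec[OF n c]
      using eigvec_mate[of r k c] mate_ge_1[of r]
      by cases (auto simp: eigvec_at_centre eigvec_0 eigvec_1 eigvec_1[unfolded One_nat_def]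
          algebra_simps)
  qed
  moreover have "(\<Sum>l = 0..<n. eigvec k l r * reduced_entry k l c) = ?F"
  proof -
    have "(\<Sum>l = 0..<n. eigvec k l r * reduced_entry k l c) = (\<Sum>l = 0..<n.
        (if l = 0 then (if c = 1 then 2 * real k * eigvec k l r else 0) else 0)
      + (if l = 1 then (if c = 0 then eigvec k l r else if c = 1 then (4 * real k - 3) * eigvec k l r else 0) else 0)
      + (if l = c then (if c < 2 then 0 else (if c < k + 2 then -1 else -3) * eigvec k l r) else 0))"
      by (rule sum.cong) (auto simp: reduced_entry_def)
    moreover have "1 < n" using n k by simp
    ultimately show ?thesis using c by (simp add: sum.distrib)
  qed
  ultimately show ?thesis by simp
qed

definition eigcoord :: "nat \<Rightarrow> nat \<Rightarrow> nat \<Rightarrow> real" where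
  "eigcoord k r l =
    (if r = 0 then (if l = 0 then 1 else 0)
     else if r = 1 then eigvec k 1 l / (2 * real k)
     else if r < k + 2 then pair_alt (r - 2) l / 2
     else eigvec k 1 l / (2 * real k) - pair_ind (r - k - 1) l / 2)"

lemma eigcoord_eigvec:
  assumes n: "n = 2 * k + 1" and k: "k \<ge> 1" and r: "r < n" and c: "c < n"
  shows "(\<Sum>l = 0..<n. eigcoord k r l * eigvec k c l) = (if r = c then 1 else 0)"
proof -
  have S: "(\<Sum>l = 0..<n. eigvec k 1 l * eigvec k c l) / (2 * real k) = (if c = 1 then 1 else 0)"
    unfolding sum_eigvec_1_mult sum_eigvec[OF n c] using n k by (simp add: eigvec_at_centre)
  consider "r = 0" | "r = 1" | "2 \<le> r" "r < k + 2" | "k + 2 \<le> r" by linarith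
  then show ?thesis
  proof cases
    case 1
    have "(\<Sum>l = 0..<n. eigcoord k r l * eigvec k c l) = (\<Sum>l = 0..<n. if l = 0 then eigvec k c l else 0)"
      by (rule sum.cong) (auto simp: eigcoord_def 1)
    then show ?thesis using 1 n by (simp add: eigvec_at_centre)
  next
    case 2
    have "(\<Sum>l = 0..<n. eigcoord k r l * eigvec k c l) = (\<Sum>l = 0..<n. eigvec k 1 l * eigvec k c l) / (2 * real k)"
      by (simp add: eigcoord_def 2 sum_divide_distrib)
    then show ?thesis using S 2 by simp
  next
    case 3
    have pair: "2 * (r - 2) + 2 < n" using 3 n by simp
    have "(\<Sum>l = 0..<n. eigcoord k r l * eigvec k c l) = (\<Sum>l = 0..<n. pair_alt (r - 2) l * eigvec k c l) / 2"
      using 3 by (simp add: eigcoord_def sum_divide_distrib)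
    also have "\<dots> = (eigvec k c (2 * (r - 2) + 1) - eigvec k c (2 * (r - 2) + 2)) / 2"
      by (simp add: sum_pair_alt_mult[OF pair])
    also have "\<dots> = (if r = c then 1 else 0)"
      using 3 n c by (auto simp: eigvec_def pair_alt_def pair_ind_def)
    finally show ?thesis .
  next
    case 4
    have pair: "2 * (r - k - 1) + 2 < n" using 4 n r by simp
    have "(\<Sum>l = 0..<n. eigcoord k r l * eigvec k c l) = (\<Sum>l = 0..<n. eigvec k 1 l * eigvec k c l) / (2 * real k)
        - (\<Sum>l = 0..<n. pair_ind (r - k - 1) l * eigvec k c l) / 2"
      using 4 by (simp add: eigcoord_def sum_divide_distrib sum_subtractf left_diff_distrib)
    also have "\<dots> = (if c = 1 then 1 else 0) - (eigvec k c (2 * (r - k - 1) + 1) + eigvec k c (2 * (r - k - 1) + 2)) / 2"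
      unfolding S sum_pair_ind_mult[OF pair] ..
    also have "\<dots> = (if r = c then 1 else 0)"
      using 4 n c by (auto simp: eigvec_def pair_alt_def pair_ind_def)
    finally show ?thesis .
  qed
qed

lemma char_poly_eq_if_intertwined:
  fixes A B P Q :: "'a :: field mat"
  assumes A: "A \<in> carrier_mat n n" and B: "B \<in> carrier_mat n n"
    and P: "P \<in> carrier_mat n n" and Q: "Q \<in> carrier_mat n n"
    and QP: "Q * P = 1\<^sub>m n" and AP: "A * P = P * B"
  shows "char_poly A = char_poly B"
proof -
  have PQ: "P * Q = 1\<^sub>m n" by (rule mat_mult_left_right_inverse[OF Q P QP])
  have "A = A * (P * Q)" using A by (simp add: PQ)
  also have "\<dots> = A * P * Q" by (rule assoc_mult_mat[symmetric, OF A P Q])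
  finally have "A = P * B * Q" unfolding AP .
  then have "similar_mat_wit A B P Q"
    using A B P Q PQ QP by (auto simp: similar_mat_wit_def)
  then show ?thesis by (intro char_poly_similar) (auto simp: similar_mat_def)
qed

definition eigbasis_mat :: "nat \<Rightarrow> nat \<Rightarrow> real mat" where
  "eigbasis_mat k n = mat n n (\<lambda>(r, c). eigvec k c r)"

definition eigcoord_mat :: "nat \<Rightarrow> nat \<Rightarrow> real mat" where
  "eigcoord_mat k n = mat n n (\<lambda>(r, l). eigcoord k r l)"

definition reduced_mat :: "nat \<Rightarrow> nat \<Rightarrow> real mat" where
  "reduced_mat k n = mat n n (\<lambda>(l, c). reduced_entry k l c)"

lemma char_poly_friendship_eq_reduced:
  assumes n: "n = 2 * k + 1" and k: "k \<ge> 1"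
  shows "char_poly (distance_matrix (friendship_adj k) n) = char_poly (reduced_mat k n)"
proof (rule char_poly_eq_if_intertwined)
  show "eigcoord_mat k n * eigbasis_mat k n = 1\<^sub>m n"
    by (rule eq_matI)
      (auto simp: eigcoord_mat_def eigbasis_mat_def scalar_prod_def eigcoord_eigvec[OF n k])
  show "distance_matrix (friendship_adj k) n * eigbasis_mat k n = eigbasis_mat k n * reduced_mat k n"
    unfolding distance_matrix_friendship[OF n]
    by (rule eq_matI)
      (auto simp: eigbasis_mat_def reduced_mat_def scalar_prod_def friendship_dist_eigvec[OF n k])
qed (auto simp: distance_matrix_def eigbasis_mat_def eigcoord_mat_def reduced_mat_def)

lemma char_poly_four_block_lower_left_zero:
  fixes A1 :: "'a :: idom mat"
  assumes A1: "A1 \<in> carrier_mat m m" and A2: "A2 \<in> carrier_mat m n" and A3: "A3 \<in> carrier_mat n n"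
  shows "char_poly (four_block_mat A1 A2 (0\<^sub>m n m) A3) = char_poly A1 * char_poly A3"
proof -
  let ?cm = "\<lambda>A. [:0, 1:] \<cdot>\<^sub>m 1\<^sub>m (dim_row A) + map_mat (\<lambda>a. [:- a:]) A"
  have "?cm (four_block_mat A1 A2 (0\<^sub>m n m) A3) =
      four_block_mat (?cm A1) (map_mat (\<lambda>a. [:- a:]) A2) (0\<^sub>m n m) (?cm A3)"
    by (rule eq_matI) (use A1 A2 A3 in \<open>auto simp: one_poly_def\<close>)
  moreover have "det \<dots> = det (?cm A1) * det (?cm A3)"
    by (rule det_four_block_mat_lower_left_zero[of _ m _ n]) (use A1 A2 A3 in auto)
  ultimately show ?thesis unfolding char_poly_defs by simp
qed

lemma char_poly_2x2:
  fixes A :: "'a :: comm_ring_1 mat"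
  assumes A: "A \<in> carrier_mat 2 2"
  shows "char_poly A = [: A $$ (0, 0) * A $$ (1, 1) - A $$ (0, 1) * A $$ (1, 0), - (A $$ (0, 0) + A $$ (1, 1)), 1 :]"
proof -
  define M where "M = char_poly_matrix A"
  have M: "M \<in> carrier_mat 2 2" using A by (simp add: M_def char_poly_matrix_def)
  have minor: "det (mat_delete M i 0) = M $$ (if 0 < i then 0 else 1, 1)" for i
  proof -
    have "mat_delete M i 0 \<in> carrier_mat 1 1" using mat_delete_carrier[OF M] by simp
    then show ?thesis by (simp add: det_single mat_delete_def) (use M in \<open>auto simp: M_def\<close>)
  qed
  have "char_poly A = (\<Sum>i<2. M $$ (i, 0) * cofactor M i 0)"
    unfolding char_poly_def M_def[symmetric] by (rule laplace_expansion_column[OF M]) simp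
  also have "\<dots> = M $$ (0, 0) * M $$ (1, 1) - M $$ (1, 0) * M $$ (0, 1)"
    by (simp add: cofactor_def minor numeral_2_eq_2 lessThan_Suc)
  also have "\<dots> = [: A $$ (0, 0) * A $$ (1, 1) - A $$ (0, 1) * A $$ (1, 0), - (A $$ (0, 0) + A $$ (1, 1)), 1 :]"
    using A by (simp add: M_def char_poly_matrix_def algebra_simps)
  finally show ?thesis .
qed

lemma char_poly_reduced_mat:
  assumes n: "n = 2 * k + 1" and k: "k \<ge> 1"
  shows "char_poly (reduced_mat k n) =
    [:1, 1:] ^ k * [:3, 1:] ^ (k - 1) * [: - 2 * real k, - (4 * real k - 3), 1 :]"
proof -
  define C where "C = mat 2 2 (\<lambda>(i, j). reduced_entry k i j)"
  define T where "T = mat (n - 2) (n - 2) (\<lambda>(i, j). reduced_entry k (i + 2) (j + 2))"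
  have "reduced_mat k n = four_block_mat C (0\<^sub>m 2 (n - 2)) (0\<^sub>m (n - 2) 2) T"
    by (rule eq_matI) (use n k in \<open>auto simp: reduced_mat_def C_def T_def reduced_entry_def\<close>)
  then have "char_poly (reduced_mat k n) = char_poly C * char_poly T"
    by (simp add: char_poly_four_block_lower_left_zero C_def T_def)
  moreover have "char_poly C = [: - 2 * real k, - (4 * real k - 3), 1 :]"
    by (simp add: char_poly_2x2 C_def reduced_entry_def)
  moreover have "char_poly T = [:1, 1:] ^ k * [:3, 1:] ^ (k - 1)"
  proof -
    have "T \<in> carrier_mat (n - 2) (n - 2)" "upper_triangular T"
      by (auto simp: T_def upper_triangular_def reduced_entry_def)
    moreover have "diag_mat T = replicate k (-1) @ replicate (k - 1) (-3)"
      by (rule nth_equalityI) (use n in \<open>auto simp: diag_mat_def T_def reduced_entry_def nth_append\<close>)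
    ultimately show ?thesis by (simp add: char_poly_upper_triangular)
  qed
  ultimately show ?thesis by (simp only: ac_simps)
qed

lemma order_prod_linear:
  fixes xs :: "'a :: idom list"
  shows "order a (\<Prod>x\<leftarrow>xs. [:- x, 1:]) = count (mset xs) a"
proof (induction xs)
  case Nil
  then show ?case by (simp add: order_0I)
next
  case (Cons x xs)
  have "(\<Prod>x\<leftarrow>x # xs. [:- x, 1:]) \<noteq> 0" unfolding prod_list_zero_iff by auto
  note nonzero = this[unfolded list.map prod_list.Cons]
  show ?case
    unfolding list.map prod_list.Cons order_mult[OF nonzero] Cons.IH
    by (simp add: order_linear')
qed

lemma mset_eq_if_prod_linear_eq:
  fixes xs ys :: "'a :: idom list"
  assumes "(\<Prod>x\<leftarrow>xs. [:- x, 1:]) = (\<Prod>y\<leftarrow>ys. [:- y, 1:])"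
  shows "mset xs = mset ys"
  by (rule multiset_eqI) (metis assms order_prod_linear)

lemma sorted_desc_eq_if_mset_eq:
  fixes xs ys :: "'a :: linorder list"
  assumes "sorted_wrt (\<ge>) xs" "sorted_wrt (\<ge>) ys" "mset xs = mset ys"
  shows "xs = ys"
proof -
  have "sorted (rev xs)" "sorted (rev ys)" using assms(1,2) by (simp_all add: sorted_wrt_rev)
  then have "sort (rev xs) = rev xs" "sort (rev xs) = rev ys"
    using assms(3) by (auto intro: properties_for_sort)
  then show ?thesis by simp
qed

lemma friendship_quadratic_roots:
  assumes k: "k \<ge> 2"
  obtains r1 r2 :: real
  where "[: - 2 * real k, - (4 * real k - 3), 1 :] = [:- r1, 1:] * [:- r2, 1:]"
    and "0 < r1" and "-1 < r2" and "r2 < -1/2"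
proof
  define d where "d = (4 * real k - 3)\<^sup>2 + 8 * real k"
  define r1 where "r1 = (4 * real k - 3 + sqrt d) / 2"
  define r2 where "r2 = (4 * real k - 3 - sqrt d) / 2"
  have kr: "real k \<ge> 2" using k by simp
  have sqrt_lower: "4 * real k - 2 < sqrt d"
    by (rule real_less_rsqrt) (use kr in \<open>simp add: d_def power2_eq_square algebra_simps\<close>)
  have "d < (4 * real k - 1)\<^sup>2" using kr by (simp add: d_def power2_eq_square algebra_simps)
  then have sqrt_upper: "sqrt d < 4 * real k - 1"
    using kr real_sqrt_less_mono by fastforce
  show "0 < r1" using sqrt_lower kr by (simp add: r1_def)
  show "-1 < r2" "r2 < -1/2" using sqrt_lower sqrt_upper by (simp_all add: r2_def)
  have "sqrt d * sqrt d = d" by (simp add: d_def)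
  then have "r1 * r2 = - 2 * real k"
    by (simp add: r1_def r2_def d_def field_simps power2_eq_square)
  moreover have "r1 + r2 = 4 * real k - 3" by (simp add: r1_def r2_def field_simps)
  ultimately show "[: - 2 * real k, - (4 * real k - 3), 1 :] = [:- r1, 1:] * [:- r2, 1:]"
    by (simp add: algebra_simps)
qed

theorem corollary2p9:
  fixes k n :: nat
  assumes "k \<ge> 2" and "n = 2*k + 1"
  shows "char_poly (distance_matrix (friendship_adj k) n) =
           [:1, 1:] ^ (n - k - 1) * [:3, 1:] ^ (k - 1) *
           [: - 2 * real k, - (4 * real k - 3), 1 :]
    \<and> (\<forall>ls :: real list. length ls = n \<and> sorted_wrt (\<ge>) ls \<and>
          char_poly (distance_matrix (friendship_adj k) n) = (\<Prod>a\<leftarrow>ls. [:- a, 1:]) \<longrightarrow>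
          -1 < ls ! 1 \<and> ls ! 1 < -1/2 \<and> ls ! 2 = -1 \<and> ls ! (n - 1) = -3)"
proof -
  have k: "k \<ge> 1" and nk: "n - k - 1 = k" using assms by auto
  have cp: "char_poly (distance_matrix (friendship_adj k) n) =
      [:1, 1:] ^ (n - k - 1) * [:3, 1:] ^ (k - 1) * [: - 2 * real k, - (4 * real k - 3), 1 :]"
    unfolding char_poly_friendship_eq_reduced[OF assms(2) k] char_poly_reduced_mat[OF assms(2) k] nk ..
  obtain r1 r2 where quad: "[: - 2 * real k, - (4 * real k - 3), 1 :] = [:- r1, 1:] * [:- r2, 1:]"
    and r1: "0 < r1" and r2: "-1 < r2" "r2 < -1/2"
    using friendship_quadratic_roots[OF assms(1)] .
  define L where "L = [r1, r2] @ replicate k (-1) @ replicate (k - 1) (-3 :: real)"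
  have L_roots: "char_poly (distance_matrix (friendship_adj k) n) = (\<Prod>a\<leftarrow>L. [:- a, 1:])"
    unfolding cp nk quad L_def
    by (simp only: map_append prod_list.append map_replicate prod_list_replicate list.map
        prod_list.Cons prod_list.Nil minus_minus mult_1_right ac_simps)
  have "sorted_wrt (\<ge>) (replicate m x)" for m and x :: real by (induction m) auto
  then have L_sorted: "sorted_wrt (\<ge>) L"
    using r1 r2 by (auto simp: L_def sorted_wrt_append)
  show ?thesis
  proof (rule conjI[OF cp], intro allI impI)
    fix ls :: "real list"
    assume ls: "length ls = n \<and> sorted_wrt (\<ge>) ls \<and>
      char_poly (distance_matrix (friendship_adj k) n) = (\<Prod>a\<leftarrow>ls. [:- a, 1:])"
    then have "ls = L"
      using sorted_desc_eq_if_mset_eq L_sorted mset_eq_if_prod_linear_eq L_roots by metis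
    then show "-1 < ls ! 1 \<and> ls ! 1 < -1/2 \<and> ls ! 2 = -1 \<and> ls ! (n - 1) = -3"
      using r2 assms by (simp add: L_def nth_append)
  qed
qed

end
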